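(* Let $\kappa$ be an infinite cardinal with $2^\kappa=\kappa^+$. Then for every sequence $\bar p=\langle p_\delta:\delta<\kappa^+\rangle$ of partitions $p_\delta:[\kappa^+]^2\to\theta_\delta$ with $\theta_\delta\le\kappa$, $\kappa^+\nrightarrow_{\bar p}[\kappa\circledast\kappa^+/1\circledast\kappa^+]^2_{\kappa^+}$ holds.
   Context: For $f:[\kappa^+]^2\to\lambda$ and $p:[\kappa^+]^2\to\theta$, $X\subseteq[\kappa^+]^2$ is $(f,p)$-strong if for every $\zeta:\theta\to\lambda$ there is $\{\alpha,\beta\}\in X$ with $f(\alpha,\beta)=\zeta(p(\alpha,\beta))$. $\{\alpha\}\circledast B=\{\{\alpha,\beta\}:\alpha<\beta\in B\}$. The symbol $\kappa^+\nrightarrow_{\bar p}[\kappa\circledast\kappa^+/1\circledast\kappa^+]^2_{\lambda}$ means: there is a single $f:[\kappa^+]^2\to\lambda$ such that for every $\delta$, every $A\in[\kappa^+]^\kappa$ and every $B\in[\kappa^+]^{\kappa^+}$ there is $\alpha\in A$ such that $\{\alpha\}\circledast B$ is $(f,p_\delta)$-strong. *)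

theory Defs
  imports Main
begin

text \<open>Strict order induced by a well-order relation r (ordinals below kappa^+
  are represented by the field of the canonical cardinal cardSuc |K|).
  A pair {alpha,beta} of [kappa^+]^2 is represented by the ordered pair
  (alpha,beta) with alpha < beta.\<close>
definition lt_rel :: "'x rel \<Rightarrow> 'x \<Rightarrow> 'x \<Rightarrow> bool" where
  "lt_rel r a b \<longleftrightarrow> (a, b) \<in> r \<and> a \<noteq> b"

definition circledast :: "'x rel \<Rightarrow> 'x \<Rightarrow> 'x set \<Rightarrow> ('x \<times> 'x) set" where
  "circledast r a B = {(a, b) | b. b \<in> B \<and> lt_rel r a b}"

definition strong :: "('x \<Rightarrow> 'x \<Rightarrow> 'l) \<Rightarrow> ('x \<Rightarrow> 'x \<Rightarrow> 'c) \<Rightarrow> 'c set \<Rightarrow> 'l set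
    \<Rightarrow> ('x \<times> 'x) set \<Rightarrow> bool" where
  "strong f p Theta Lambda X \<longleftrightarrow>
     (\<forall>zeta. (\<forall>c\<in>Theta. zeta c \<in> Lambda) \<longrightarrow>
        (\<exists>(a, b)\<in>X. f a b = zeta (p a b)))"

text \<open>kappa^+ -/->_pbar [kappa circledast kappa^+ / 1 circledast kappa^+]^2_Lambda,
  where kappa^+ is given by the well-order r (field = kappa^+), kappa = |K|,
  the colour set is Lambda and p delta has colours in Theta delta.\<close>
definition neg_rel :: "'x rel \<Rightarrow> 'k set \<Rightarrow> 'l set \<Rightarrow> ('x \<Rightarrow> 'x \<Rightarrow> 'x \<Rightarrow> 'c)
    \<Rightarrow> ('x \<Rightarrow> 'c set) \<Rightarrow> bool" where
  "neg_rel r K Lambda p Theta \<longleftrightarrow>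
     (\<exists>f :: 'x \<Rightarrow> 'x \<Rightarrow> 'l.
        (\<forall>a\<in>Field r. \<forall>b\<in>Field r. lt_rel r a b \<longrightarrow> f a b \<in> Lambda) \<and>
        (\<forall>delta\<in>Field r. \<forall>A B.
            A \<subseteq> Field r \<and> (card_of A, card_of K) \<in> ordIso \<and>
            B \<subseteq> Field r \<and> (card_of B, card_of (Field r)) \<in> ordIso \<longrightarrow>
            (\<exists>a\<in>A. strong f (p delta) (Theta delta) Lambda (circledast r a B))))"

end

theory Submission
  imports Defs
begin

text \<open>Since \<open>2\<^sup>\<kappa> = \<kappa>\<^sup>+\<close>, all guesses \<open>(\<delta>, A, \<langle>\<zeta>\<^sub>\<alpha> : \<alpha> \<in> A\<rangle>)\<close> with
  \<open>A \<in> [\<kappa>\<^sup>+]\<^sup>\<kappa>\<close> and \<open>\<zeta>\<^sub>\<alpha> : \<theta>\<^sub>\<delta> \<rightarrow> \<kappa>\<^sup>+\<close> can be listed as \<open>\<langle>(\<delta>\<^sub>\<gamma>, A\<^sub>\<gamma>, Z\<^sub>\<gamma>) : \<gamma> < \<kappa>\<^sup>+\<rangle>\<close>.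
  For each \<open>\<beta>\<close> there are at most \<open>\<kappa>\<close> indices \<open>\<gamma> < \<beta>\<close> with \<open>A\<^sub>\<gamma> \<subseteq> \<beta>\<close>, so they
  have pairwise distinct representatives \<open>\<alpha>\<^sub>\<gamma> \<in> A\<^sub>\<gamma>\<close>, and we set
  \<open>f(\<alpha>\<^sub>\<gamma>, \<beta>) = Z\<^sub>\<gamma>(\<alpha>\<^sub>\<gamma>)(p\<^sub>\<delta>\<^sub>\<gamma>(\<alpha>\<^sub>\<gamma>, \<beta>))\<close>. If no \<open>\<alpha> \<in> A\<close> made \<open>{\<alpha>} \<circledast> B\<close>
  strong for \<open>p\<^sub>\<delta>\<close>, the witnesses of failure would form a guess \<open>\<gamma>\<close>; any \<open>\<beta> \<in> B\<close>
  above \<open>\<gamma>\<close> and above \<open>A\<close> (it exists as \<open>\<kappa>\<^sup>+\<close> is regular) then yields a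
  contradiction at \<open>\<alpha>\<^sub>\<gamma>\<close>.\<close>

unbundle cardinal_syntax

lemma lt_rel_Field: "lt_rel r a b \<Longrightarrow> a \<in> Field r \<and> b \<in> Field r"
  unfolding lt_rel_def by (auto intro: FieldI1 FieldI2)

lemma underS_iff_lt_rel: "a \<in> underS r b \<longleftrightarrow> lt_rel r a b"
  unfolding underS_def lt_rel_def by auto

lemma underS_subset_of_lt_rel:
  "Well_order r \<Longrightarrow> lt_rel r a b \<Longrightarrow> underS r a \<subseteq> underS r b"
  unfolding lt_rel_def order_on_defs using underS_incr by metis

lemma card_of_insert_ordLeq_infinite:
  "infinite K \<Longrightarrow> |A| \<le>o |K| \<Longrightarrow> |insert a A| \<le>o |K|"
  using card_of_Un_ordLeq_infinite_Field[of "|K|" "{a}" A] card_of_singl_ordLeq[of K a]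
  by (auto simp: Field_card_of card_of_card_order_on)

lemma card_of_underS_cardSuc: "|underS (cardSuc |K| ) b| \<le>o |K|"
proof (cases "b \<in> Field (cardSuc |K| )")
  case True
  then have "|underS (cardSuc |K| ) b| <o cardSuc |K|"
    by (rule card_of_underS[OF cardSuc_Card_order[OF card_of_Card_order]])
  then show ?thesis
    using cardSuc_ordLeq_ordLess[OF card_of_Card_order card_of_Card_order] by blast
next
  case False
  then have "underS (cardSuc |K| ) b = {}"
    unfolding underS_def by (auto intro: FieldI2)
  then show ?thesis by (simp add: card_of_empty)
qed

lemma card_of_Field_cardSuc_greater: "|K| <o |Field (cardSuc |K| )|"
  using cardSuc_greater[OF card_of_Card_order, of K]
    card_of_Field_ordIso[OF cardSuc_Card_order[OF card_of_Card_order, of K]]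
  by (blast intro: ordLess_ordIso_trans ordIso_symmetric)

lemma cardSuc_large_set_unbounded:
  assumes "infinite K" and "B \<subseteq> Field (cardSuc |K| )"
    and "|B| =o |Field (cardSuc |K| )|" and "a \<in> Field (cardSuc |K| )"
  shows "\<exists>b\<in>B. lt_rel (cardSuc |K| ) a b"
proof (rule ccontr)
  let ?r = "cardSuc |K|"
  assume none: "\<not> ?thesis"
  have "B \<subseteq> insert a (underS ?r a)"
  proof
    fix b assume "b \<in> B"
    then have "\<not> lt_rel ?r a b" and "b \<in> Field ?r"
      using none assms(2) by auto
    moreover have "Well_order ?r" by (rule cardSuc_Well_order[OF card_of_Card_order])
    ultimately show "b \<in> insert a (underS ?r a)"
      using assms(4) unfolding underS_def lt_rel_def order_on_defs total_on_def by auto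
  qed
  then have "|B| \<le>o |K|"
    by (rule ordLeq_transitive[OF card_of_mono1
          card_of_insert_ordLeq_infinite[OF assms(1) card_of_underS_cardSuc]])
  then have "|Field ?r| \<le>o |K|"
    by (rule ordIso_ordLeq_trans[OF ordIso_symmetric[OF assms(3)]])
  then show False
    using card_of_Field_cardSuc_greater not_ordLess_ordLeq by blast
qed

text \<open>This is where the regularity of \<open>\<kappa>\<^sup>+\<close> enters.\<close>
lemma cardSuc_small_set_bounded:
  assumes "infinite K" and "X \<subseteq> Field (cardSuc |K| )" and "|X| \<le>o |K|"
  shows "\<exists>b\<in>Field (cardSuc |K| ). X \<subseteq> underS (cardSuc |K| ) b"
proof -
  let ?r = "cardSuc |K|"
  have "relChain ?r (underS ?r)"
    unfolding relChain_def
    using underS_incr cardSuc_Well_order[OF card_of_Card_order, of K]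
    unfolding order_on_defs by metis
  moreover have "X \<subseteq> (\<Union>b\<in>Field ?r. underS ?r b)"
    using assms(2)
      cardSuc_large_set_unbounded[OF assms(1) subset_refl ordIso_refl[OF card_of_Card_order]]
    by (force simp: underS_iff_lt_rel)
  ultimately show ?thesis
    using cardSuc_UNION[OF card_of_Card_order, of K "underS ?r" X] assms(1,3)
    by (simp add: Field_card_of)
qed

lemma cardSuc_large_set_exceeds_small:
  assumes "infinite K" and "X \<subseteq> Field (cardSuc |K| )" and "|X| \<le>o |K|"
    and "B \<subseteq> Field (cardSuc |K| )" and "|B| =o |Field (cardSuc |K| )|"
  shows "\<exists>b\<in>B. X \<subseteq> underS (cardSuc |K| ) b"
proof -
  obtain b0 where "b0 \<in> Field (cardSuc |K| )" and X: "X \<subseteq> underS (cardSuc |K| ) b0"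
    using cardSuc_small_set_bounded[OF assms(1-3)] by blast
  then obtain b where "b \<in> B" and "lt_rel (cardSuc |K| ) b0 b"
    using cardSuc_large_set_unbounded[OF assms(1,4,5)] by blast
  then show ?thesis
    using X underS_subset_of_lt_rel[OF cardSuc_Well_order[OF card_of_Card_order]] by blast
qed

text \<open>Transfinite recursion along the initial well-order of \<open>K\<close>: at stage \<open>k\<close> fewer
  than \<open>|K|\<close> values have been used, so \<open>S k\<close> still has an unused element.\<close>
lemma distinct_representatives_on_subset:
  assumes "J \<subseteq> K" and large: "\<forall>k\<in>J. |K| \<le>o |S k|"
  shows "\<exists>h. inj_on h J \<and> (\<forall>k\<in>J. h k \<in> S k)"
proof -
  let ?w = "|K|"
  have wo: "Well_order ?w" by (rule card_of_Well_order)
  then have wf: "wf (?w - Id)" unfolding well_order_on_def by blast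
  define h where "h = wfrec (?w - Id) (\<lambda>h k. SOME x. x \<in> S k \<and> x \<notin> h ` underS ?w k)"
  have step: "h k \<in> S k \<and> h k \<notin> h ` underS ?w k" if "k \<in> J" for k
  proof -
    have "h ` underS ?w k = cut h (?w - Id) k ` underS ?w k"
      by (intro image_cong refl) (auto simp: cut_apply underS_def)
    then have h_k: "h k = (SOME x. x \<in> S k \<and> x \<notin> h ` underS ?w k)"
      unfolding h_def by (subst wfrec[OF wf]) simp
    have "|underS ?w k| <o ?w"
      using card_of_underS[OF card_of_Card_order, of k K] that assms(1) by (auto simp: Field_card_of)
    then have "|h ` underS ?w k| <o |K|"
      by (rule ordLeq_ordLess_trans[OF card_of_image])
    then have "\<not> S k \<subseteq> h ` underS ?w k"
      using large that card_of_mono1 not_ordLess_ordLeq ordLeq_transitive by metis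
    then have "\<exists>x. x \<in> S k \<and> x \<notin> h ` underS ?w k" by blast
    then show ?thesis unfolding h_k by (rule someI_ex)
  qed
  have "inj_on h J"
  proof (rule inj_onI)
    fix k l assume "k \<in> J" "l \<in> J" "h k = h l"
    moreover have "k \<noteq> l \<Longrightarrow> k \<in> underS ?w l \<or> l \<in> underS ?w k"
      using wo \<open>k \<in> J\<close> \<open>l \<in> J\<close> assms(1)
      unfolding underS_def order_on_defs total_on_def Field_card_of by blast
    ultimately show "k = l" using step by (metis imageI)
  qed
  with step show ?thesis by blast
qed

lemma distinct_representatives:
  assumes "|I| \<le>o |K|" and "\<forall>i\<in>I. |K| \<le>o |S i|"
  shows "\<exists>g. inj_on g I \<and> (\<forall>i\<in>I. g i \<in> S i)"
proof -
  obtain \<iota> where \<iota>: "inj_on \<iota> I" "\<iota> ` I \<subseteq> K"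
    using card_of_ordLeq[of I K] assms(1) by auto
  have "\<forall>k\<in>\<iota> ` I. |K| \<le>o |S (inv_into I \<iota> k)|"
    using assms(2) \<iota>(1) by simp
  then obtain h where h: "inj_on h (\<iota> ` I)" "\<forall>k\<in>\<iota> ` I. h k \<in> S (inv_into I \<iota> k)"
    using distinct_representatives_on_subset[OF \<iota>(2), where S="\<lambda>k. S (inv_into I \<iota> k)"]
    by blast
  have "inj_on (h \<circ> \<iota>) I" by (rule comp_inj_on[OF \<iota>(1) h(1)])
  moreover have "\<forall>i\<in>I. (h \<circ> \<iota>) i \<in> S i" using h(2) \<iota>(1) by simp
  ultimately show ?thesis by blast
qed

lemma card_of_Func_ordLeq_Pow:
  assumes "infinite K" and F: "|F| =o |Pow K|" and "|T| \<le>o |K|"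
  shows "|Func T F| \<le>o |F|"
proof -
  have Kinf: "Cinfinite |K|" and Knz: "Cnotzero |K|"
    using assms(1) by (auto simp: cinfinite_def Field_card_of card_of_card_order_on
        card_of_ordIso_czero_iff_empty)
  have F2: "|F| =o ctwo ^c |K|"
    using ordIso_transitive[OF F card_of_Pow_Func] by (simp add: cexp_def ctwo_def Field_card_of)
  have "|Func K F| =o (ctwo ^c |K| ) ^c |K|"
    using cexp_cong1[OF F2 card_of_Card_order] by (simp add: cexp_def Field_card_of)
  also have "(ctwo ^c |K| ) ^c |K| =o ctwo ^c |K|"
    by (rule cexp_cprod_ordLeq[OF Card_order_ctwo Kinf Knz ordLeq_refl[OF card_of_Card_order]])
  also have "ctwo ^c |K| =o |F|" by (rule ordIso_symmetric[OF F2])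
  finally have FK: "|Func K F| \<le>o |F|" by (rule ordIso_imp_ordLeq)
  show ?thesis
  proof (cases "T = {}")
    case True
    have "F \<noteq> {}" using F card_of_ordIso[of F "Pow K"] by (auto simp: bij_betw_def)
    have "Func T F = {\<lambda>_. undefined}" using True by (simp add: Func_empty)
    then show ?thesis using card_of_singl_ordLeq[OF \<open>F \<noteq> {}\<close>] by simp
  next
    case False
    have "|Func T F| \<le>o |Func K F|"
      using cexp_mono'[OF ordLeq_refl[OF card_of_Card_order] assms(3)] False
      by (simp add: cexp_def Field_card_of)
    then show ?thesis using FK by (rule ordLeq_transitive)
  qed
qed

lemma ordIso_Pow_imp_ordLeq: "|F| =o |Pow K| \<Longrightarrow> |K| \<le>o |F|"
  using card_of_Pow[of K] by (blast intro: ordLess_imp_ordLeq ordLess_ordIso_trans ordIso_symmetric)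

text \<open>A guess \<open>(\<delta>, A, Z)\<close> proposes, for each \<open>\<alpha> \<in> A\<close>, a colouring
  \<open>Z \<alpha> : \<Theta>\<^sub>\<delta> \<rightarrow> F\<close> that \<open>{\<alpha>} \<circledast> B\<close> might fail to realise.\<close>
definition guesses :: "'k set \<Rightarrow> ('x \<Rightarrow> 'c set) \<Rightarrow> 'x set \<Rightarrow> ('x \<times> 'x set \<times> ('x \<Rightarrow> 'c \<Rightarrow> 'x)) set"
  where "guesses K Theta F =
    (SIGMA d:F. SIGMA A:{A. A \<subseteq> F \<and> |A| =o |K|}. Func A (Func (Theta d) F))"

lemma card_of_subsets_ordIso_ordLeq_Func:
  "|{A. A \<subseteq> F \<and> |A| =o |K|}| \<le>o |Func K F|"
proof -
  have "{A. A \<subseteq> F \<and> |A| =o |K|} \<subseteq> (\<lambda>h. h ` K) ` Func K F"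
  proof
    fix A assume "A \<in> {A. A \<subseteq> F \<and> |A| =o |K|}"
    then obtain b where b: "bij_betw b K A" and "A \<subseteq> F"
      using card_of_ordIso ordIso_symmetric by blast
    then have "(\<lambda>k. if k \<in> K then b k else undefined) \<in> Func K F"
      by (auto simp: Func_def bij_betw_def)
    moreover have "A = (\<lambda>k. if k \<in> K then b k else undefined) ` K"
      using b by (auto simp: bij_betw_def)
    ultimately show "A \<in> (\<lambda>h. h ` K) ` Func K F" by blast
  qed
  then show ?thesis by (rule ordLeq_transitive[OF card_of_mono1 card_of_image])
qed

lemma card_of_guesses:
  assumes "infinite K" and F: "|F| =o |Pow K|" and "\<forall>d\<in>F. |Theta d| \<le>o |K|"
  shows "|guesses K Theta F| \<le>o |F|"
proof -
  have "infinite F"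
    using ordIso_Pow_imp_ordLeq[OF F] assms(1) card_of_ordLeq_finite by blast
  have "|{A. A \<subseteq> F \<and> |A| =o |K|}| \<le>o |F|"
    using card_of_subsets_ordIso_ordLeq_Func
      card_of_Func_ordLeq_Pow[OF assms(1) F ordLeq_refl[OF card_of_Card_order]]
    by (rule ordLeq_transitive)
  moreover have "|Func A (Func (Theta d) F)| \<le>o |F|" if "d \<in> F" "|A| =o |K|" for d A
  proof -
    have "|Func A (Func (Theta d) F)| \<le>o |Func A F|"
      using cexp_mono'[OF card_of_Func_ordLeq_Pow[OF assms(1) F, of "Theta d"]
          ordLeq_refl[OF card_of_Card_order, of A]] assms(3) that(1)
      by (simp add: cexp_def Field_card_of)
    also have "|Func A F| \<le>o |F|"
      using card_of_Func_ordLeq_Pow[OF assms(1) F ordIso_imp_ordLeq[OF that(2)]] .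
    finally show ?thesis .
  qed
  ultimately show ?thesis
    unfolding guesses_def using \<open>infinite F\<close>
    by (intro card_of_Sigma_ordLeq_infinite ordLeq_refl[OF card_of_Card_order] ballI) auto
qed

lemma guesses_enumeration:
  assumes "infinite K" and F: "|F| =o |Pow K|" and "\<forall>d\<in>F. |Theta d| \<le>o |K|"
  obtains s where "s ` F = guesses K Theta F"
proof -
  obtain \<iota> where \<iota>: "inj_on \<iota> K" "\<iota> ` K \<subseteq> F"
    using card_of_ordLeq[of K F] ordIso_Pow_imp_ordLeq[OF F] by auto
  then have "|\<iota> ` K| =o |K|"
    using card_of_ordIso[of K "\<iota> ` K"] inj_on_imp_bij_betw ordIso_symmetric by blast
  moreover have "F \<noteq> {}" using \<iota>(2) assms(1) by auto
  then obtain d where "d \<in> F" by blast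
  moreover have "Func (\<iota> ` K) (Func (Theta d) F) \<noteq> {}"
    using \<open>F \<noteq> {}\<close> by (simp add: Func_is_emp)
  ultimately have "guesses K Theta F \<noteq> {}"
    using \<iota>(2) unfolding guesses_def by blast
  then show ?thesis
    using that card_of_ordLeq2[of "guesses K Theta F" F] card_of_guesses[OF assms] by blast
qed

lemma strong_circledast_iff:
  "strong f q T L (circledast r a B) \<longleftrightarrow>
     (\<forall>z. (\<forall>c\<in>T. z c \<in> L) \<longrightarrow> (\<exists>b\<in>B. lt_rel r a b \<and> f a b = z (q a b)))"
  unfolding strong_def circledast_def by blast

lemma cardSuc_guessing_colouring:
  fixes K :: "'k set"
  assumes large: "\<forall>g\<in>Field (cardSuc |K| ). |K| \<le>o |A g|"
    and Y: "\<forall>g\<in>Field (cardSuc |K| ). \<forall>a\<in>A g. \<forall>b. lt_rel (cardSuc |K| ) a b \<longrightarrow> Y g a b \<in> L"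
    and "L \<noteq> {}"
  obtains f where "\<forall>a b. f a b \<in> L"
    and "\<forall>g b. lt_rel (cardSuc |K| ) g b \<and> A g \<subseteq> underS (cardSuc |K| ) b \<longrightarrow>
           (\<exists>a\<in>A g. f a b = Y g a b)"
proof -
  let ?r = "cardSuc |K|"
  define I where "I b = {g. lt_rel ?r g b \<and> A g \<subseteq> underS ?r b}" for b
  have "\<forall>b. \<exists>G. inj_on G (I b) \<and> (\<forall>g\<in>I b. G g \<in> A g)"
  proof (intro allI distinct_representatives)
    fix b
    have "I b \<subseteq> underS ?r b" unfolding I_def by (auto simp: underS_iff_lt_rel)
    then show "|I b| \<le>o |K|"
      by (rule ordLeq_transitive[OF card_of_mono1 card_of_underS_cardSuc])
    have "I b \<subseteq> Field ?r" unfolding I_def lt_rel_def by (auto intro: FieldI1)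
    then show "\<forall>g\<in>I b. |K| \<le>o |A g|" using large by blast
  qed
  then obtain G where G: "\<And>b. inj_on (G b) (I b) \<and> (\<forall>g\<in>I b. G b g \<in> A g)"
    by (metis choice)
  obtain z where "z \<in> L" using \<open>L \<noteq> {}\<close> by blast
  define f where
    "f a b = (if a \<in> G b ` I b then Y (the_inv_into (I b) (G b) a) a b else z)" for a b
  show ?thesis
  proof (rule that)
    show "\<forall>a b. f a b \<in> L"
    proof (intro allI)
      fix a b
      show "f a b \<in> L"
      proof (cases "a \<in> G b ` I b")
        case True
        then obtain g where g: "g \<in> I b" "a = G b g" by blast
        then have "f a b = Y g a b" using G by (simp add: f_def the_inv_into_f_f)
        moreover have "a \<in> A g" using G g by blast
        moreover have "lt_rel ?r a b" "lt_rel ?r g b"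
          using \<open>a \<in> A g\<close> g(1) unfolding I_def by (auto simp: underS_iff_lt_rel)
        ultimately show ?thesis using Y lt_rel_Field by metis
      qed (simp add: f_def \<open>z \<in> L\<close>)
    qed
    show "\<forall>g b. lt_rel ?r g b \<and> A g \<subseteq> underS ?r b \<longrightarrow> (\<exists>a\<in>A g. f a b = Y g a b)"
    proof (intro allI impI)
      fix g b assume "lt_rel ?r g b \<and> A g \<subseteq> underS ?r b"
      then have "g \<in> I b" unfolding I_def by blast
      then have "G b g \<in> A g" and "f (G b g) b = Y g (G b g) b"
        using G by (auto simp: f_def the_inv_into_f_f)
      then show "\<exists>a\<in>A g. f a b = Y g a b" by blast
    qed
  qed
qed

lemma colouring_catching_guesses:
  fixes K :: "'k set" and p :: "'k set \<Rightarrow> 'k set \<Rightarrow> 'k set \<Rightarrow> 'c"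
  assumes "infinite K" and "|Pow K| =o cardSuc |K|"
    and "\<forall>d\<in>Field (cardSuc |K| ). |Theta d| \<le>o |K|"
    and p: "\<forall>d\<in>Field (cardSuc |K| ). \<forall>a\<in>Field (cardSuc |K| ). \<forall>b\<in>Field (cardSuc |K| ).
              lt_rel (cardSuc |K| ) a b \<longrightarrow> p d a b \<in> Theta d"
  obtains f where "\<forall>a b. f a b \<in> Field (cardSuc |K| )"
    and "\<forall>(d, A, Z)\<in>guesses K Theta (Field (cardSuc |K| )). \<exists>g\<in>Field (cardSuc |K| ).
           \<forall>b. lt_rel (cardSuc |K| ) g b \<and> A \<subseteq> underS (cardSuc |K| ) b \<longrightarrow>
             (\<exists>a\<in>A. f a b = Z a (p d a b))"
proof -
  let ?r = "cardSuc |K|"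
  let ?F = "Field ?r"
  have "|?F| =o |Pow K|"
    using card_of_Field_ordIso[OF cardSuc_Card_order[OF card_of_Card_order]] assms(2)
    by (blast intro: ordIso_transitive ordIso_symmetric)
  then obtain s where s: "s ` ?F = guesses K Theta ?F"
    using guesses_enumeration[OF assms(1) _ assms(3)] by blast
  define D where "D g = fst (s g)" for g
  define A where "A g = fst (snd (s g))" for g
  define Z where "Z g = snd (snd (s g))" for g
  have guess: "D g \<in> ?F \<and> |A g| =o |K| \<and> Z g \<in> Func (A g) (Func (Theta (D g)) ?F)"
    if "g \<in> ?F" for g
  proof -
    have "(D g, A g, Z g) \<in> guesses K Theta ?F"
      using that s unfolding D_def A_def Z_def by auto
    then show ?thesis unfolding guesses_def by simp
  qed
  obtain f where f_range: "\<forall>a b. f a b \<in> ?F"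
    and f_guess: "\<forall>g b. lt_rel ?r g b \<and> A g \<subseteq> underS ?r b \<longrightarrow>
                    (\<exists>a\<in>A g. f a b = Z g a (p (D g) a b))"
  proof (rule cardSuc_guessing_colouring)
    show "\<forall>g\<in>?F. |K| \<le>o |A g|" using guess ordIso_iff_ordLeq by blast
    show "\<forall>g\<in>?F. \<forall>a\<in>A g. \<forall>b. lt_rel ?r a b \<longrightarrow> Z g a (p (D g) a b) \<in> ?F"
    proof (intro ballI allI impI)
      fix g a b assume g: "g \<in> ?F" and "a \<in> A g" and ab: "lt_rel ?r a b"
      have "p (D g) a b \<in> Theta (D g)"
        using guess[OF g] p ab lt_rel_Field[OF ab] by blast
      then show "Z g a (p (D g) a b) \<in> ?F"
        using guess[OF g] \<open>a \<in> A g\<close> unfolding Func_def by blast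
    qed
    show "?F \<noteq> {}" by (rule Field_cardSuc_not_empty[OF card_of_Card_order])
  qed
  show ?thesis
  proof (rule that[OF f_range], safe)
    fix d A' Z' assume "(d, A', Z') \<in> guesses K Theta ?F"
    then obtain g where g: "g \<in> ?F" "s g = (d, A', Z')"
      using s by (metis imageE)
    then have "D g = d" "A g = A'" "Z g = Z'" by (simp_all add: D_def A_def Z_def)
    with g(1) f_guess
    show "\<exists>g\<in>?F. \<forall>b. lt_rel ?r g b \<and> A' \<subseteq> underS ?r b \<longrightarrow> (\<exists>a\<in>A'. f a b = Z' a (p d a b))"
      by metis
  qed
qed

lemma neg_rel_of_colouring_catching_guesses:
  fixes K :: "'k set" and p :: "'k set \<Rightarrow> 'k set \<Rightarrow> 'k set \<Rightarrow> 'c"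
  assumes "infinite K"
    and p: "\<forall>d\<in>Field (cardSuc |K| ). \<forall>a\<in>Field (cardSuc |K| ). \<forall>b\<in>Field (cardSuc |K| ).
              lt_rel (cardSuc |K| ) a b \<longrightarrow> p d a b \<in> Theta d"
    and f_range: "\<forall>a b. f a b \<in> Field (cardSuc |K| )"
    and f_catch: "\<forall>(d, A, Z)\<in>guesses K Theta (Field (cardSuc |K| )). \<exists>g\<in>Field (cardSuc |K| ).
           \<forall>b. lt_rel (cardSuc |K| ) g b \<and> A \<subseteq> underS (cardSuc |K| ) b \<longrightarrow>
             (\<exists>a\<in>A. f a b = Z a (p d a b))"
  shows "neg_rel (cardSuc |K| ) K (Field (cardSuc |K| )) p Theta"
  unfolding neg_rel_def
proof (intro exI[of _ f] conjI ballI allI impI)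
  let ?r = "cardSuc |K|"
  let ?F = "Field ?r"
  fix d A B
  assume d: "d \<in> ?F" and "A \<subseteq> ?F \<and> |A| =o |K| \<and> B \<subseteq> ?F \<and> |B| =o |?F|"
  then have A: "A \<subseteq> ?F" "|A| =o |K|" and B: "B \<subseteq> ?F" "|B| =o |?F|" by auto
  show "\<exists>a\<in>A. strong f (p d) (Theta d) ?F (circledast ?r a B)"
  proof (rule ccontr)
    assume "\<not> ?thesis"
    then obtain \<zeta> where \<zeta>: "\<forall>a\<in>A. (\<forall>c\<in>Theta d. \<zeta> a c \<in> ?F) \<and>
                                (\<forall>b\<in>B. lt_rel ?r a b \<longrightarrow> f a b \<noteq> \<zeta> a (p d a b))"
      unfolding strong_circledast_iff by metis
    define Z where "Z a = (if a \<in> A then \<lambda>c. if c \<in> Theta d then \<zeta> a c else undefined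
                           else undefined)" for a
    have "(d, A, Z) \<in> guesses K Theta ?F"
      using d A \<zeta> unfolding guesses_def Z_def Func_def by auto
    then obtain g where g: "g \<in> ?F"
      and catch: "\<forall>b. lt_rel ?r g b \<and> A \<subseteq> underS ?r b \<longrightarrow> (\<exists>a\<in>A. f a b = Z a (p d a b))"
      using f_catch by blast
    have "|insert g A| \<le>o |K|"
      by (intro card_of_insert_ordLeq_infinite[OF assms(1)] ordIso_imp_ordLeq A)
    moreover have "insert g A \<subseteq> ?F" using g A by blast
    ultimately obtain b where "b \<in> B" and b: "insert g A \<subseteq> underS ?r b"
      using cardSuc_large_set_exceeds_small[OF assms(1) _ _ B] by blast
    then obtain a where a: "a \<in> A" and fab: "f a b = Z a (p d a b)"
      using catch by (auto simp: underS_iff_lt_rel)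
    have ab: "lt_rel ?r a b" using a b by (auto simp: underS_iff_lt_rel)
    then have "p d a b \<in> Theta d" using p d lt_rel_Field[OF ab] by blast
    then show False using \<zeta> a ab fab \<open>b \<in> B\<close> by (simp add: Z_def)
  qed
qed (use f_range in blast)

theorem theorem4p11:
  fixes K :: "'k set"
    and p :: "'k set \<Rightarrow> 'k set \<Rightarrow> 'k set \<Rightarrow> 'c"
    and Theta :: "'k set \<Rightarrow> 'c set"
  assumes "infinite K"
    and "(card_of (Pow K), cardSuc (card_of K)) \<in> ordIso"
    and "\<forall>delta\<in>Field (cardSuc (card_of K)). (card_of (Theta delta), card_of K) \<in> ordLeq"
    and "\<forall>delta\<in>Field (cardSuc (card_of K)). \<forall>a\<in>Field (cardSuc (card_of K)).
           \<forall>b\<in>Field (cardSuc (card_of K)).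
           lt_rel (cardSuc (card_of K)) a b \<longrightarrow> p delta a b \<in> Theta delta"
  shows "neg_rel (cardSuc (card_of K)) K (Field (cardSuc (card_of K))) p Theta"
proof -
  obtain f where "\<forall>a b. f a b \<in> Field (cardSuc |K| )"
    and "\<forall>(d, A, Z)\<in>guesses K Theta (Field (cardSuc |K| )). \<exists>g\<in>Field (cardSuc |K| ).
           \<forall>b. lt_rel (cardSuc |K| ) g b \<and> A \<subseteq> underS (cardSuc |K| ) b \<longrightarrow>
             (\<exists>a\<in>A. f a b = Z a (p d a b))"
    using colouring_catching_guesses[OF assms] .
  then show ?thesis by (rule neg_rel_of_colouring_catching_guesses[OF assms(1,4)])
qed

end
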